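(* Let $0<\alpha<1$, let $g:\mathbb{R}\to\mathbb{R}$ be locally bounded with $g\in C^\alpha(x_0)$, i.e. there exist $C>0$ and a constant $c$ such that $|g(x)-c|\le C|x-x_0|^\alpha$ on a neighbourhood of $x_0$. Let $\Omega=\{(x,y)\in\mathbb{R}^2: y\le g(x)\}$ be the domain below the graph of $g$ (respectively $\Omega=\{(x,y): y\ge g(x)\}$ the domain above it), and $X_0=(x_0,g(x_0))$. Then $X_0$ is strong $\left(\frac1\alpha-1\right)$-accessible in both $\Omega$ and $\Omega^c=\mathbb{R}^2\setminus\Omega$, i.e. for $A\in\{\Omega,\Omega^c\}$ there exist $C'>0$ and $r_0>0$ such that $\mathrm{meas}(A\cap B(X_0,r))\ge C' r^{\frac1\alpha+1}$ for all $r\le r_0$.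
   Context: $\mathrm{meas}$ denotes Lebesgue measure on $\mathbb{R}^2$ and $B(X,r)$ the open disc of centre $X$ and radius $r$. *)

theory Defs
  imports "HOL-Analysis.Analysis"
begin

text \<open>For Lebesgue measurable sets this is exactly the Lebesgue measure; it is used so that
  no measurability assumption on g has to be added.\<close>
definition meas :: "(real \<times> real) set \<Rightarrow> ennreal" where
  "meas A = (SUP S \<in> {S \<in> sets lebesgue. S \<subseteq> A}. emeasure lebesgue S)"

definition locally_bounded :: "(real \<Rightarrow> real) \<Rightarrow> bool" where
  "locally_bounded g \<longleftrightarrow> (\<forall>x. \<exists>e>0. \<exists>M. \<forall>y. \<bar>y - x\<bar> < e \<longrightarrow> \<bar>g y\<bar> \<le> M)"

definition holder_at :: "real \<Rightarrow> (real \<Rightarrow> real) \<Rightarrow> real \<Rightarrow> bool" where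
  "holder_at \<alpha> g x0 \<longleftrightarrow> (\<exists>C>0. \<exists>c. \<exists>\<delta>>0. \<forall>x. \<bar>x - x0\<bar> < \<delta> \<longrightarrow>
       \<bar>g x - c\<bar> \<le> C * \<bar>x - x0\<bar> powr \<alpha>)"

definition strong_accessible :: "real \<Rightarrow> (real \<times> real) set \<Rightarrow> real \<times> real \<Rightarrow> bool" where
  "strong_accessible \<beta> A X0 \<longleftrightarrow> (\<exists>C'>0. \<exists>r0>0. \<forall>r. 0 < r \<and> r \<le> r0 \<longrightarrow>
       meas (A \<inter> ball X0 r) \<ge> ennreal (C' * r powr (\<beta> + 2)))"

end

theory Submission imports Defs begin

text \<open>Near \<open>x0\<close> the graph of \<open>g\<close> stays inside the cusp \<open>\<bar>y - g x0\<bar> \<le> C \<bar>x - x0\<bar>^\<alpha>\<close>, so both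
  \<open>\<Omega>\<close> and its complement contain the part of the disc \<open>B(X0, r)\<close> lying strictly below
  (respectively above) that cusp. At distance between \<open>r/2\<close> and \<open>3r/4\<close> from \<open>g x0\<close> the cusp
  has half-width \<open>s = (r/(2C))^(1/\<alpha>)\<close>, which is at most \<open>r/4\<close> for small \<open>r\<close> because
  \<open>1/\<alpha> > 1\<close>. Hence a rectangle of width \<open>2s\<close> and height \<open>r/4\<close> fits in the disc on either
  side of the graph, and its area is a constant times \<open>r^(1/\<alpha> + 1)\<close>.\<close>

lemma emeasure_lebesgue_rectangle:
  fixes a b l u :: real
  assumes "a \<le> b" "l \<le> u"
  shows "emeasure lebesgue ({a<..<b} \<times> {l<..<u}) = ennreal ((b - a) * (u - l))"
proof -
  have "emeasure lebesgue ({a<..<b} \<times> {l<..<u}) = emeasure (lborel \<Otimes>\<^sub>M lborel) ({a<..<b} \<times> {l<..<u})"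
    by (simp add: lborel_prod[symmetric])
  also have "\<dots> = emeasure lborel {a<..<b} * emeasure lborel {l<..<u}"
    by (intro sigma_finite_measure.emeasure_pair_measure_Times lborel.sigma_finite_measure_axioms)
      auto
  finally show ?thesis
    using assms by (simp add: ennreal_mult)
qed

lemma meas_ge_emeasure:
  assumes "S \<in> sets lebesgue" "S \<subseteq> A"
  shows "emeasure lebesgue S \<le> meas A"
  unfolding meas_def using assms by (intro SUP_upper) auto

lemma strong_accessible_if_eventually:
  assumes "C' > 0"
    and "\<forall>\<^sub>F r in at_right 0. ennreal (C' * r powr (\<beta> + 2)) \<le> meas (A \<inter> ball X0 r)"
  shows "strong_accessible \<beta> A X0"
proof -
  obtain b where "b > 0" and b: "\<And>r. 0 < r \<Longrightarrow> r < b \<Longrightarrow> ennreal (C' * r powr (\<beta> + 2)) \<le> meas (A \<inter> ball X0 r)"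
    using assms(2) unfolding eventually_at_right[OF zero_less_one] by auto
  then show ?thesis
    unfolding strong_accessible_def using assms(1)
    by (intro exI[of _ C'] conjI exI[of _ "b/2"]) auto
qed

lemma eventually_powr_le_linear:
  fixes p k \<epsilon> :: real
  assumes "p > 1" "\<epsilon> > 0"
  shows "\<forall>\<^sub>F r in at_right 0. k * r powr p \<le> \<epsilon> * r"
proof -
  have "((\<lambda>r. r powr (p - 1)) \<longlongrightarrow> 0) (at_right 0)"
    using assms
    by (intro tendsto_zero_powrI[where b = "p - 1"] tendsto_ident_at tendsto_const
        eventually_mono[OF eventually_at_right_less]) auto
  then have "((\<lambda>r. k * r powr (p - 1)) \<longlongrightarrow> k * 0) (at_right 0)"
    by (intro tendsto_mult tendsto_const)
  then have "\<forall>\<^sub>F r in at_right 0. k * r powr (p - 1) < \<epsilon>"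
    using assms(2) by (auto dest: order_tendstoD)
  then show ?thesis
    using eventually_at_right_less
  proof eventually_elim
    case (elim r)
    then have "k * r powr (p - 1) * r \<le> \<epsilon> * r"
      by (intro mult_right_mono) auto
    with \<open>r > 0\<close> show ?case
      by (simp add: powr_diff field_simps)
  qed
qed

lemma mem_ball_prod_if_dist_less:
  fixes x x' y y' :: "'a :: metric_space"
  assumes "dist x y < a" "dist x' y' < b" "a\<^sup>2 + b\<^sup>2 \<le> r\<^sup>2" "r \<ge> 0"
  shows "(y, y') \<in> ball (x, x') r"
proof -
  have "(dist x y)\<^sup>2 + (dist x' y')\<^sup>2 < a\<^sup>2 + b\<^sup>2"
    using assms(1,2) by (intro add_strict_mono power_strict_mono) auto
  then have "sqrt ((dist x y)\<^sup>2 + (dist x' y')\<^sup>2) < sqrt (r\<^sup>2)"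
    using assms(3) by (intro real_sqrt_less_mono) linarith
  then show ?thesis
    using assms(4) by (simp add: dist_Pair_Pair)
qed

text \<open>The sign \<open>\<sigma> = 1\<close> gives the region below the cusp with vertex \<open>(x0, c)\<close>, and \<open>\<sigma> = -1\<close>
  the region above it.\<close>

lemma strong_accessible_cusp:
  fixes \<alpha> C \<delta> c x0 \<sigma> :: real
  assumes "0 < \<alpha>" "\<alpha> < 1" "C > 0" "\<delta> > 0" "\<bar>\<sigma>\<bar> = 1"
    and cusp: "\<And>x y. \<bar>x - x0\<bar> < \<delta> \<Longrightarrow> C * \<bar>x - x0\<bar> powr \<alpha> < \<sigma> * (c - y) \<Longrightarrow> (x, y) \<in> A"
  shows "strong_accessible (1/\<alpha> - 1) A (x0, c)"
proof (rule strong_accessible_if_eventually)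
  define k where "k = (2 * C) powr (- 1/\<alpha>)"
  show "k/2 > 0"
    using assms by (simp add: k_def)
  have "\<forall>\<^sub>F r in at_right 0. k * r powr (1/\<alpha>) \<le> 1/4 * r"
    using assms by (intro eventually_powr_le_linear) auto
  moreover have "\<forall>\<^sub>F r in at_right 0. r < 4 * \<delta>"
    using assms(4) by (intro eventually_at_right_real[THEN eventually_mono]) auto
  ultimately show "\<forall>\<^sub>F r in at_right 0.
      ennreal (k/2 * r powr (1/\<alpha> - 1 + 2)) \<le> meas (A \<inter> ball (x0, c) r)"
    using eventually_at_right_less
  proof eventually_elim
    case (elim r)
    define s where "s = k * r powr (1/\<alpha>)"
    define l where "l = (if \<sigma> = 1 then c - 3*r/4 else c + r/2)"
    have "s > 0" "s \<le> r/4"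
      using elim assms by (auto simp: s_def k_def)
    have "C * s powr \<alpha> = C * ((2 * C) powr (- 1) * r)"
      using assms \<open>r > 0\<close> by (simp add: s_def k_def powr_mult powr_powr)
    then have height: "C * s powr \<alpha> = r/2"
      using assms(3) by (simp add: powr_minus field_simps)
    have rect: "{x0 - s<..<x0 + s} \<times> {l<..<l + r/4} \<subseteq> A \<inter> ball (x0, c) r"
    proof safe
      fix x y assume "x \<in> {x0 - s<..<x0 + s}" "y \<in> {l<..<l + r/4}"
      then have "\<bar>x - x0\<bar> < s" "r/2 < \<sigma> * (c - y)" "\<bar>c - y\<bar> < 3*r/4"
        using assms(5) by (auto simp: l_def abs_if split: if_splits)
      moreover have "C * \<bar>x - x0\<bar> powr \<alpha> \<le> C * s powr \<alpha>"
        using \<open>\<bar>x - x0\<bar> < s\<close> assms by (intro mult_left_mono powr_mono2) auto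
      ultimately show "(x, y) \<in> A"
        using cusp \<open>s \<le> r/4\<close> elim height by force
      have "(r/4)\<^sup>2 + (3*r/4)\<^sup>2 \<le> r\<^sup>2"
        by (simp add: power2_eq_square field_simps)
      then show "(x, y) \<in> ball (x0, c) r"
        using \<open>\<bar>x - x0\<bar> < s\<close> \<open>s \<le> r/4\<close> \<open>\<bar>c - y\<bar> < 3*r/4\<close> elim
        by (intro mem_ball_prod_if_dist_less) (auto simp: dist_real_def abs_minus_commute)
    qed
    have "k/2 * r powr (1/\<alpha> - 1 + 2) = (x0 + s - (x0 - s)) * (l + r/4 - l)"
      using \<open>r > 0\<close> by (simp add: s_def powr_add field_simps)
    also have "ennreal \<dots> = emeasure lebesgue ({x0 - s<..<x0 + s} \<times> {l<..<l + r/4})"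
      using \<open>s > 0\<close> \<open>r > 0\<close> by (simp add: emeasure_lebesgue_rectangle)
    also have "\<dots> \<le> meas (A \<inter> ball (x0, c) r)"
      using rect by (intro meas_ge_emeasure) (auto simp: lborel_prod[symmetric])
    finally show ?case .
  qed
qed

lemma strong_accessible_graph_side:
  fixes \<alpha> \<sigma> :: real and g :: "real \<Rightarrow> real"
  assumes "0 < \<alpha>" "\<alpha> < 1" "holder_at \<alpha> g x0" "\<bar>\<sigma>\<bar> = 1"
    and side: "\<And>x y. 0 < \<sigma> * (g x - y) \<Longrightarrow> (x, y) \<in> A"
  shows "strong_accessible (1/\<alpha> - 1) A (x0, g x0)"
proof -
  obtain C c \<delta> where "C > 0" "\<delta> > 0"
    and holder: "\<And>x. \<bar>x - x0\<bar> < \<delta> \<Longrightarrow> \<bar>g x - c\<bar> \<le> C * \<bar>x - x0\<bar> powr \<alpha>"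
    using assms(3) unfolding holder_at_def by blast
  have "g x0 = c"
    using holder[of x0] \<open>\<delta> > 0\<close> by simp
  show ?thesis
  proof (unfold \<open>g x0 = c\<close>, rule strong_accessible_cusp[where \<sigma> = \<sigma>])
    fix x y assume x: "\<bar>x - x0\<bar> < \<delta>" and y: "C * \<bar>x - x0\<bar> powr \<alpha> < \<sigma> * (c - y)"
    have "\<sigma> * (c - g x) \<le> C * \<bar>x - x0\<bar> powr \<alpha>"
      using abs_ge_self[of "\<sigma> * (c - g x)"] holder[OF x] assms(4)
      by (simp add: abs_mult abs_minus_commute)
    with y have "0 < \<sigma> * (g x - y)"
      by (simp add: algebra_simps)
    then show "(x, y) \<in> A"
      by (rule side)
  qed (use assms \<open>C > 0\<close> \<open>\<delta> > 0\<close> in auto)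
qed

theorem mainTheorem2:
  fixes \<alpha> :: real and g :: "real \<Rightarrow> real" and x0 :: real
  assumes "0 < \<alpha>" and "\<alpha> < 1"
    and "locally_bounded g"
    and "holder_at \<alpha> g x0"
    and "\<Omega> = {(x, y). y \<le> g x} \<or> \<Omega> = {(x, y). y \<ge> g x}"
  shows "strong_accessible (1 / \<alpha> - 1) \<Omega> (x0, g x0)
       \<and> strong_accessible (1 / \<alpha> - 1) (- \<Omega>) (x0, g x0)"
proof -
  have below: "strong_accessible (1/\<alpha> - 1) A (x0, g x0)"
    if "\<And>x y. y < g x \<Longrightarrow> (x, y) \<in> A" for A
    using assms(1,2,4) that by (intro strong_accessible_graph_side[where \<sigma> = 1]) auto
  have above: "strong_accessible (1/\<alpha> - 1) A (x0, g x0)"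
    if "\<And>x y. g x < y \<Longrightarrow> (x, y) \<in> A" for A
    using assms(1,2,4) that by (intro strong_accessible_graph_side[where \<sigma> = "-1"]) auto
  from assms(5) show ?thesis
  proof
    assume "\<Omega> = {(x, y). y \<le> g x}"
    then show ?thesis
      using below[of \<Omega>] above[of "- \<Omega>"] by auto
  next
    assume "\<Omega> = {(x, y). y \<ge> g x}"
    then show ?thesis
      using above[of \<Omega>] below[of "- \<Omega>"] by auto
  qed
qed

end
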